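(* Let $\mathbf T$ be a countable homogeneous tournament and $\mathbf T^*$ an expansion of $\mathbf T$ as in the context such that $\mathrm{Age}(\mathbf T^* )$ has the Ramsey property. Then for every positive integer $n$, the class $\mathrm{Age}(I_n[\mathbf T]^* )$ has the Ramsey property.
   Context: For relational structures $\mathbf A,\mathbf B$ in the same language, $\binom{\mathbf B}{\mathbf A}$ denotes the set of substructures of $\mathbf B$ isomorphic to $\mathbf A$. For $k\ge 1$, $\mathbf C\to(\mathbf B)^{\mathbf A}_k$ means: for every map $c:\binom{\mathbf C}{\mathbf A}\to[k]=\{0,\dots,k-1\}$ there is $\mathbf B'\in\binom{\mathbf C}{\mathbf B}$ such that $c$ is constant on $\binom{\mathbf B'}{\mathbf A}$. A class $\mathcal K$ of finite structures has the Ramsey property if for all $k\ge1$ and all $\mathbf A,\mathbf B\in\mathcal K$ there is $\mathbf C\in\mathcal K$ with $\mathbf C\to(\mathbf B)^{\mathbf A}_k$. The age $\mathrm{Age}(\mathbf F)$ of a structure $\mathbf F$ is the class of finite structures embeddable in $\mathbf F$. A tournament is a directed graph in which every pair of distinct vertices carries exactly one directed edge; it is homogeneous if every isomorphism between finite substructures extends to an automorphism. $\mathbf T=(T,E^{\mathbf T})$ is a countable homogeneous tournament, and $\mathbf T^*$ is an expansion of $\mathbf T$ to a countable relational language $L_{\mathbf T^*}\supseteq\{E,<\}$ in which $<$ is interpreted as a linear order $<^*$ on $T$. For a positive integer $n$, $[n]=\{0,\dots,n-1\}$. The structure $I_n[\mathbf T]^*$ has universe $[n]\times T$ and language $L_{\mathbf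 T^*}\cup\{P_0,\dots,P_{n-1}\}$ ($P_i$ new unary symbols), interpreted as: for each $m$-ary $R\in L_{\mathbf T^*}\setminus\{<\}$ (including $E$), $R((k_1,x_1),\dots,(k_m,x_m))$ iff $k_1=\dots=k_m$ and $R^{\mathbf T^*}(x_1,\dots,x_m)$; $(i,x)<(j,y)$ iff $i<j$, or $i=j$ and $x<^*y$; and $P_i=\{i\}\times T$. (Thus its $\{E\}$-reduct $I_n[\mathbf T]$ is the disjoint union of $n$ copies of $\mathbf T$ with no edges between copies.) *)

theory Defs
  imports Main "HOL-Library.Countable_Set"
begin

text \<open>A language is given by a set
  L of symbols and an arity function ar; only tuples of the right length consisting
  of elements of the universe are ever consulted.\<close>

type_synonym ('a, 'r) struct = "'a set \<times> ('r \<Rightarrow> 'a list \<Rightarrow> bool)"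

definition univ :: "('a, 'r) struct \<Rightarrow> 'a set" where
  "univ A = fst A"

definition rel :: "('a, 'r) struct \<Rightarrow> 'r \<Rightarrow> 'a list \<Rightarrow> bool" where
  "rel A = snd A"

definition induced :: "('a, 'r) struct \<Rightarrow> 'a set \<Rightarrow> ('a, 'r) struct" where
  "induced A S = (S, rel A)"

definition is_iso :: "'r set \<Rightarrow> ('r \<Rightarrow> nat) \<Rightarrow> ('a, 'r) struct \<Rightarrow> ('b, 'r) struct \<Rightarrow> ('a \<Rightarrow> 'b) \<Rightarrow> bool" where
  "is_iso L ar A B f \<longleftrightarrow> bij_betw f (univ A) (univ B) \<and>
     (\<forall>R\<in>L. \<forall>xs. length xs = ar R \<and> set xs \<subseteq> univ A \<longrightarrow>
        (rel A R xs \<longleftrightarrow> rel B R (map f xs)))"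

definition isomorphic :: "'r set \<Rightarrow> ('r \<Rightarrow> nat) \<Rightarrow> ('a, 'r) struct \<Rightarrow> ('b, 'r) struct \<Rightarrow> bool" where
  "isomorphic L ar A B \<longleftrightarrow> (\<exists>f. is_iso L ar A B f)"

definition is_embedding :: "'r set \<Rightarrow> ('r \<Rightarrow> nat) \<Rightarrow> ('a, 'r) struct \<Rightarrow> ('b, 'r) struct \<Rightarrow> ('a \<Rightarrow> 'b) \<Rightarrow> bool" where
  "is_embedding L ar A B f \<longleftrightarrow> inj_on f (univ A) \<and> f ` univ A \<subseteq> univ B \<and>
     (\<forall>R\<in>L. \<forall>xs. length xs = ar R \<and> set xs \<subseteq> univ A \<longrightarrow>
        (rel A R xs \<longleftrightarrow> rel B R (map f xs)))"

text \<open>Age: the finite structures embeddable in F.  Finite structures are taken with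
  universe a finite set of natural numbers (every finite structure is isomorphic to one).\<close>
definition Age :: "'r set \<Rightarrow> ('r \<Rightarrow> nat) \<Rightarrow> ('a, 'r) struct \<Rightarrow> (nat, 'r) struct set" where
  "Age L ar F = {A. finite (univ A) \<and> (\<exists>f. is_embedding L ar A F f)}"

text \<open>binom C A: substructures of C isomorphic to A, identified with their universes.\<close>
definition binom :: "'r set \<Rightarrow> ('r \<Rightarrow> nat) \<Rightarrow> ('a, 'r) struct \<Rightarrow> ('b, 'r) struct \<Rightarrow> 'a set set" where
  "binom L ar C A = {S. S \<subseteq> univ C \<and> isomorphic L ar (induced C S) A}"

definition arrows :: "'r set \<Rightarrow> ('r \<Rightarrow> nat) \<Rightarrow> ('a, 'r) struct \<Rightarrow> ('b, 'r) struct \<Rightarrow> ('c, 'r) struct \<Rightarrow> nat \<Rightarrow> bool" where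
  "arrows L ar C B A k \<longleftrightarrow>
     (\<forall>c :: 'a set \<Rightarrow> nat. (\<forall>S\<in>binom L ar C A. c S < k) \<longrightarrow>
        (\<exists>B'\<in>binom L ar C B. \<exists>i. \<forall>S\<in>binom L ar (induced C B') A. c S = i))"

definition ramsey_property :: "'r set \<Rightarrow> ('r \<Rightarrow> nat) \<Rightarrow> ('a, 'r) struct set \<Rightarrow> bool" where
  "ramsey_property L ar K \<longleftrightarrow>
     (\<forall>k::nat. k \<ge> 1 \<longrightarrow> (\<forall>A\<in>K. \<forall>B\<in>K. \<exists>C\<in>K. arrows L ar C B A k))"

definition tournament :: "'r \<Rightarrow> ('a, 'r) struct \<Rightarrow> bool" where
  "tournament E T \<longleftrightarrow>
     (\<forall>x\<in>univ T. \<not> rel T E [x, x]) \<and>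
     (\<forall>x\<in>univ T. \<forall>y\<in>univ T. x \<noteq> y \<longrightarrow> (rel T E [x, y] \<longleftrightarrow> \<not> rel T E [y, x]))"

definition homogeneous :: "'r set \<Rightarrow> ('r \<Rightarrow> nat) \<Rightarrow> ('a, 'r) struct \<Rightarrow> bool" where
  "homogeneous L ar F \<longleftrightarrow>
     (\<forall>S1 S2 f. finite S1 \<and> finite S2 \<and> S1 \<subseteq> univ F \<and> S2 \<subseteq> univ F \<and>
        is_iso L ar (induced F S1) (induced F S2) f \<longrightarrow>
        (\<exists>g. is_iso L ar F F g \<and> (\<forall>x\<in>S1. g x = f x)))"

definition linear_order_rel :: "'r \<Rightarrow> ('a, 'r) struct \<Rightarrow> bool" where
  "linear_order_rel lt T \<longleftrightarrow>
     (\<forall>x\<in>univ T. \<not> rel T lt [x, x]) \<and>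
     (\<forall>x\<in>univ T. \<forall>y\<in>univ T. \<forall>z\<in>univ T. rel T lt [x, y] \<and> rel T lt [y, z] \<longrightarrow> rel T lt [x, z]) \<and>
     (\<forall>x\<in>univ T. \<forall>y\<in>univ T. x \<noteq> y \<longrightarrow> rel T lt [x, y] \<or> rel T lt [y, x])"

text \<open>The language of I_n[T]^*: the symbols of L (as Inl) plus unary P_i = Inr i, i < n.\<close>
definition In_lang :: "'r set \<Rightarrow> nat \<Rightarrow> ('r + nat) set" where
  "In_lang L n = Inl ` L \<union> Inr ` {..<n}"

definition In_ar :: "('r \<Rightarrow> nat) \<Rightarrow> ('r + nat) \<Rightarrow> nat" where
  "In_ar ar = case_sum ar (\<lambda>_. 1)"

definition In_struct :: "'r \<Rightarrow> nat \<Rightarrow> ('a, 'r) struct \<Rightarrow> (nat \<times> 'a, 'r + nat) struct" where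
  "In_struct lt n T =
    ({..<n} \<times> univ T,
     \<lambda>s xs. case s of
        Inl R \<Rightarrow>
          (if R = lt then
             (case xs of [p, q] \<Rightarrow> fst p < fst q \<or> (fst p = fst q \<and> rel T lt [snd p, snd q])
                       | _ \<Rightarrow> False)
           else (\<forall>p\<in>set xs. \<forall>q\<in>set xs. fst p = fst q) \<and> rel T R (map snd xs))
      | Inr i \<Rightarrow> (case xs of [p] \<Rightarrow> fst p = i | _ \<Rightarrow> False))"

end

theory Submission
  imports Defs "HOL-Library.FuncSet"
begin

text \<open>
  An isomorphism between finite substructures of \<open>I\<^sub>n[T]\<^sup>*\<close> preserves every unary
  predicate \<open>P\<^sub>i\<close>, so it is a family of isomorphisms between the slices of the two
  substructures in the \<open>n\<close> copies of \<open>T\<^sup>*\<close>; conversely every such family glues to an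
  isomorphism, because the order between different copies is fixed. Hence the copies of
  \<open>A\<close> in a finite substructure are exactly the "products" of copies of the slices of
  \<open>A\<close> in the slices, and the theorem becomes a product Ramsey statement for
  \<open>Age(T\<^sup>*)\<close>. That statement is proved by induction on the number of coordinates: the copies
  in a new coordinate are coloured by the whole vector of colours they induce on the products
  of the earlier coordinates, which takes only finitely many values, so the Ramsey property
  of \<open>Age(T\<^sup>*)\<close> applies with that many colours.

  Only the Ramsey property of \<open>Age(T\<^sup>*)\<close> and the binarity of the order symbol are used.
\<close>

section \<open>Substructures, isomorphisms and arrows\<close>

lemma univ_induced [simp]: "univ (induced A S) = S"
  by (simp add: induced_def univ_def)

lemma rel_induced [simp]: "rel (induced A S) = rel A"
  by (simp add: induced_def rel_def)

lemma induced_induced [simp]: "induced (induced A X) Y = induced A Y"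
  by (simp add: induced_def rel_def)

lemma binom_induced: "binom L ar (induced T X) A = {S. S \<subseteq> X \<and> isomorphic L ar (induced T S) A}"
  by (simp add: binom_def)

lemma binom_induced_mono: "Y \<subseteq> X \<Longrightarrow> binom L ar (induced T Y) A \<subseteq> binom L ar (induced T X) A"
  unfolding binom_induced by auto

lemma binom_induced_subset: "S \<in> binom L ar (induced T X) A \<Longrightarrow> S \<subseteq> X"
  unfolding binom_induced by auto

lemma is_iso_cong:
  assumes "\<And>x. x \<in> univ A \<Longrightarrow> f x = g x"
  shows "is_iso L ar A B f \<longleftrightarrow> is_iso L ar A B g"
proof -
  have "map f xs = map g xs" if "set xs \<subseteq> univ A" for xs
    using that assms by (auto intro: map_cong)
  moreover have "bij_betw f (univ A) (univ B) \<longleftrightarrow> bij_betw g (univ A) (univ B)"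
    using assms by (rule bij_betw_cong)
  ultimately show ?thesis
    unfolding is_iso_def by metis
qed

lemma is_iso_the_inv_into:
  assumes "is_iso L ar A B f"
  shows "is_iso L ar B A (the_inv_into (univ A) f)"
  unfolding is_iso_def
proof (intro conjI ballI allI impI)
  let ?h = "the_inv_into (univ A) f"
  have bij: "bij_betw f (univ A) (univ B)" using assms by (simp add: is_iso_def)
  then show bh: "bij_betw ?h (univ B) (univ A)" by (rule bij_betw_the_inv_into)
  fix R ys assume R: "R \<in> L" and ys: "length ys = ar R \<and> set ys \<subseteq> univ B"
  have "map f (map ?h ys) = ys"
    using ys f_the_inv_into_f_bij_betw[OF bij] by (simp add: map_idI subset_iff)
  moreover have "set (map ?h ys) \<subseteq> univ A" using ys bh by (auto simp: bij_betw_def)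
  ultimately show "rel B R ys \<longleftrightarrow> rel A R (map ?h ys)"
    using assms R ys unfolding is_iso_def by (metis length_map)
qed

lemma is_iso_comp:
  assumes f: "is_iso L ar A B f" and g: "is_iso L ar B C g"
  shows "is_iso L ar A C (g \<circ> f)"
  unfolding is_iso_def
proof (intro conjI ballI allI impI)
  show "bij_betw (g \<circ> f) (univ A) (univ C)"
    using f g bij_betw_trans by (auto simp: is_iso_def)
  fix R xs assume "R \<in> L" and xs: "length xs = ar R \<and> set xs \<subseteq> univ A"
  moreover have "set (map f xs) \<subseteq> univ B" using xs f by (auto simp: is_iso_def bij_betw_def)
  ultimately show "rel A R xs = rel C R (map (g \<circ> f) xs)"
    using f g unfolding is_iso_def by (metis length_map map_map)
qed

lemma isomorphic_sym: "isomorphic L ar A B \<Longrightarrow> isomorphic L ar B A"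
  unfolding isomorphic_def using is_iso_the_inv_into by blast

lemma isomorphic_trans: "isomorphic L ar A B \<Longrightarrow> isomorphic L ar B C \<Longrightarrow> isomorphic L ar A C"
  unfolding isomorphic_def using is_iso_comp by blast

lemma is_iso_induced_image:
  assumes "is_iso L ar C C' g" "S \<subseteq> univ C"
  shows "is_iso L ar (induced C S) (induced C' (g ` S)) g"
  using assms unfolding is_iso_def by (auto simp: bij_betw_def intro: inj_on_subset)

lemma is_embedding_imp_is_iso_image:
  assumes "is_embedding L ar A F e"
  shows "is_iso L ar A (induced F (e ` univ A)) e"
  using assms unfolding is_embedding_def is_iso_def by (auto simp: bij_betw_def)

lemma binom_isomorphic_cong:
  assumes "isomorphic L ar A A'"
  shows "binom L ar C A = binom L ar C A'"
  unfolding binom_def by (rule Collect_cong) (meson assms isomorphic_trans isomorphic_sym)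

lemma arrows_isomorphic_cong:
  assumes "arrows L ar C B A k" "isomorphic L ar B B'" "isomorphic L ar A A'"
  shows "arrows L ar C B' A' k"
  using assms unfolding arrows_def
  by (simp add: binom_isomorphic_cong[OF assms(2), symmetric] binom_isomorphic_cong[OF assms(3), symmetric])

lemma arrows_is_iso_transfer:
  assumes g: "is_iso L ar C C' g" and arr: "arrows L ar C B A k"
  shows "arrows L ar C' B A k"
  unfolding arrows_def
proof (intro allI impI)
  fix c' assume c': "\<forall>S\<in>binom L ar C' A. c' S < k"
  have bij: "bij_betw g (univ C) (univ C')" using g by (simp add: is_iso_def)
  have image_binom: "g ` S \<in> binom L ar C' X" if "S \<in> binom L ar C X" for S X
  proof -
    have S: "S \<subseteq> univ C" and "isomorphic L ar (induced C S) X" using that by (auto simp: binom_def)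
    moreover have "isomorphic L ar (induced C S) (induced C' (g ` S))"
      using is_iso_induced_image[OF g S] unfolding isomorphic_def by blast
    ultimately show ?thesis
      using bij by (auto simp: binom_def bij_betw_def intro: isomorphic_trans isomorphic_sym)
  qed
  have "\<forall>S\<in>binom L ar C A. c' (g ` S) < k" using c' image_binom by blast
  then obtain B' i where B': "B' \<in> binom L ar C B"
    and const: "\<forall>S\<in>binom L ar (induced C B') A. c' (g ` S) = i"
    using arr[unfolded arrows_def, rule_format, of "\<lambda>S. c' (g ` S)"] by blast
  have B'C: "B' \<subseteq> univ C" using B' by (simp add: binom_def)
  show "\<exists>B'\<in>binom L ar C' B. \<exists>i. \<forall>S\<in>binom L ar (induced C' B') A. c' S = i"
  proof (intro bexI exI ballI)
    show "g ` B' \<in> binom L ar C' B" using B' by (rule image_binom)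
    fix T' assume T': "T' \<in> binom L ar (induced C' (g ` B')) A"
    define T where "T = {x\<in>B'. g x \<in> T'}"
    have "g ` T = T'" using T' unfolding T_def binom_def by auto
    moreover have "T \<in> binom L ar (induced C B') A"
    proof -
      have "T \<subseteq> B'" unfolding T_def by auto
      moreover have "isomorphic L ar (induced C T) (induced C' (g ` T))"
        using is_iso_induced_image[OF g] \<open>T \<subseteq> B'\<close> B'C unfolding isomorphic_def by blast
      ultimately show ?thesis
        using T' \<open>g ` T = T'\<close> by (auto simp: binom_def intro: isomorphic_trans)
    qed
    ultimately show "c' T' = i" using const by blast
  qed
qed

section \<open>The Ramsey property of an age via finite substructures\<close>

lemma exists_Age_isomorphic_induced:
  assumes "finite X" "X \<subseteq> univ F"
  shows "\<exists>C\<in>Age L ar F. isomorphic L ar (induced F X) C"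
proof -
  obtain h where h: "bij_betw h {0..<card X} X" using ex_bij_betw_nat_finite[OF assms(1)] by blast
  define C :: "(nat, 'b) struct" where "C = ({0..<card X}, \<lambda>R xs. rel F R (map h xs))"
  have uC: "univ C = {0..<card X}" and rC: "rel C = (\<lambda>R xs. rel F R (map h xs))"
    by (simp_all add: C_def univ_def rel_def)
  have "is_embedding L ar C F h"
    using h assms(2) unfolding is_embedding_def uC rC by (auto simp: bij_betw_def)
  then have "C \<in> Age L ar F" using uC by (auto simp: Age_def)
  moreover have "is_iso L ar C (induced F X) h" using h unfolding is_iso_def uC rC by auto
  ultimately show ?thesis using isomorphic_sym unfolding isomorphic_def by blast
qed

lemma Age_imp_isomorphic_induced:
  assumes "A \<in> Age L ar F"
  obtains X where "finite X" "X \<subseteq> univ F" "isomorphic L ar (induced F X) A"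
proof -
  obtain e where e: "is_embedding L ar A F e" and "finite (univ A)"
    using assms unfolding Age_def by blast
  have "isomorphic L ar A (induced F (e ` univ A))"
    using is_embedding_imp_is_iso_image[OF e] unfolding isomorphic_def by blast
  then have "isomorphic L ar (induced F (e ` univ A)) A" by (rule isomorphic_sym)
  moreover have "finite (e ` univ A)" "e ` univ A \<subseteq> univ F"
    using e \<open>finite (univ A)\<close> by (auto simp: is_embedding_def)
  ultimately show thesis using that by blast
qed

definition substructure_ramsey :: "'r set \<Rightarrow> ('r \<Rightarrow> nat) \<Rightarrow> ('a, 'r) struct \<Rightarrow> bool" where
  "substructure_ramsey L ar F \<longleftrightarrow>
     (\<forall>k\<ge>1. \<forall>X Y. finite X \<longrightarrow> X \<subseteq> univ F \<longrightarrow> finite Y \<longrightarrow> Y \<subseteq> univ F \<longrightarrow>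
        (\<exists>Z. finite Z \<and> Z \<subseteq> univ F \<and> arrows L ar (induced F Z) (induced F Y) (induced F X) k))"

lemma substructure_ramsey_if_ramsey_property_Age:
  assumes R: "ramsey_property L ar (Age L ar F)"
  shows "substructure_ramsey L ar F"
  unfolding substructure_ramsey_def
proof (intro allI impI)
  fix k :: nat and X Y
  assume k: "k \<ge> 1" and X: "finite X" "X \<subseteq> univ F" and Y: "finite Y" "Y \<subseteq> univ F"
  obtain A where A: "A \<in> Age L ar F" "isomorphic L ar (induced F X) A"
    using exists_Age_isomorphic_induced[OF X] by blast
  obtain B where B: "B \<in> Age L ar F" "isomorphic L ar (induced F Y) B"
    using exists_Age_isomorphic_induced[OF Y] by blast
  obtain C where C: "C \<in> Age L ar F" and arr: "arrows L ar C B A k"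
    using R k A(1) B(1) unfolding ramsey_property_def by blast
  obtain Z where Z: "finite Z" "Z \<subseteq> univ F" "isomorphic L ar (induced F Z) C"
    by (rule Age_imp_isomorphic_induced[OF C])
  obtain g where "is_iso L ar C (induced F Z) g"
    using isomorphic_sym[OF Z(3)] unfolding isomorphic_def by blast
  then have "arrows L ar (induced F Z) B A k" using arr by (rule arrows_is_iso_transfer)
  then have "arrows L ar (induced F Z) (induced F Y) (induced F X) k"
    by (rule arrows_isomorphic_cong[OF _ isomorphic_sym[OF B(2)] isomorphic_sym[OF A(2)]])
  with Z(1,2) show "\<exists>Z. finite Z \<and> Z \<subseteq> univ F \<and> arrows L ar (induced F Z) (induced F Y) (induced F X) k"
    by blast
qed

lemma ramsey_property_Age_if_substructure_ramsey:
  assumes R: "substructure_ramsey L ar F"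
  shows "ramsey_property L ar (Age L ar F)"
  unfolding ramsey_property_def
proof (intro allI impI ballI)
  fix k :: nat and A B
  assume k: "k \<ge> 1" and A: "A \<in> Age L ar F" and B: "B \<in> Age L ar F"
  obtain X where X: "finite X" "X \<subseteq> univ F" "isomorphic L ar (induced F X) A"
    by (rule Age_imp_isomorphic_induced[OF A])
  obtain Y where Y: "finite Y" "Y \<subseteq> univ F" "isomorphic L ar (induced F Y) B"
    by (rule Age_imp_isomorphic_induced[OF B])
  obtain Z where Z: "finite Z" "Z \<subseteq> univ F"
    and arr: "arrows L ar (induced F Z) (induced F Y) (induced F X) k"
    using R[unfolded substructure_ramsey_def, rule_format, OF k X(1,2) Y(1,2)] by blast
  obtain C where C: "C \<in> Age L ar F" and "isomorphic L ar (induced F Z) C"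
    using exists_Age_isomorphic_induced[OF Z] by blast
  then obtain g where g: "is_iso L ar (induced F Z) C g" unfolding isomorphic_def by blast
  have "arrows L ar C B A k"
    using arrows_isomorphic_cong[OF arrows_is_iso_transfer[OF g arr] Y(3) X(3)] .
  with C show "\<exists>C\<in>Age L ar F. arrows L ar C B A k" ..
qed

lemma ramsey_property_Age_iff_substructure_ramsey:
  "ramsey_property L ar (Age L ar F) \<longleftrightarrow> substructure_ramsey L ar F"
  by (rule iffI[OF substructure_ramsey_if_ramsey_property_Age ramsey_property_Age_if_substructure_ramsey])

section \<open>A product Ramsey theorem\<close>

lemma arrows_finite_colours:
  assumes arr: "arrows L ar C B A (card V)" and V: "finite V" "V \<noteq> {}"
    and c: "\<forall>S\<in>binom L ar C A. c S \<in> V"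
  shows "\<exists>B'\<in>binom L ar C B. \<exists>v\<in>V. \<forall>S\<in>binom L ar (induced C B') A. c S = v"
proof -
  obtain enc where enc: "bij_betw enc V {0..<card V}" using ex_bij_betw_finite_nat[OF V(1)] by blast
  have "\<forall>S\<in>binom L ar C A. enc (c S) < card V" using c enc by (auto simp: bij_betw_def)
  then obtain B' i where B': "B' \<in> binom L ar C B"
    and const: "\<forall>S\<in>binom L ar (induced C B') A. enc (c S) = i"
    using arr[unfolded arrows_def, rule_format, of "\<lambda>S. enc (c S)"] by blast
  have "binom L ar (induced C B') A \<subseteq> binom L ar C A"
    using B' by (auto simp: binom_def)
  then have "\<exists>v\<in>V. \<forall>S\<in>binom L ar (induced C B') A. c S = v"
    using const c V(2) enc unfolding bij_betw_def inj_on_def by (metis all_not_in_conv subsetD)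
  with B' show ?thesis by blast
qed

definition prod_binom ::
  "'r set \<Rightarrow> ('r \<Rightarrow> nat) \<Rightarrow> ('a, 'r) struct \<Rightarrow> nat \<Rightarrow> (nat \<Rightarrow> 'a set) \<Rightarrow> (nat \<Rightarrow> 'a set) \<Rightarrow> (nat \<times> 'a) set set"
  where "prod_binom L ar T m X XA = {S. S \<subseteq> {..<m} \<times> UNIV \<and>
     (\<forall>i<m. S `` {i} \<in> binom L ar (induced T (X i)) (induced T (XA i)))}"

definition prod_arrows ::
  "'r set \<Rightarrow> ('r \<Rightarrow> nat) \<Rightarrow> ('a, 'r) struct \<Rightarrow> nat \<Rightarrow> (nat \<Rightarrow> 'a set) \<Rightarrow> (nat \<Rightarrow> 'a set) \<Rightarrow> (nat \<Rightarrow> 'a set) \<Rightarrow> nat \<Rightarrow> bool"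
  where "prod_arrows L ar T m XC XB XA k \<longleftrightarrow>
     (\<forall>c :: (nat \<times> 'a) set \<Rightarrow> nat. (\<forall>S\<in>prod_binom L ar T m XC XA. c S < k) \<longrightarrow>
        (\<exists>XB'. (\<forall>i<m. XB' i \<in> binom L ar (induced T (XC i)) (induced T (XB i))) \<and>
               (\<exists>j. \<forall>S\<in>prod_binom L ar T m XB' XA. c S = j)))"

lemma prod_binom_cong:
  assumes "\<And>i. i < m \<Longrightarrow> X i = X' i"
  shows "prod_binom L ar T m X XA = prod_binom L ar T m X' XA"
  unfolding prod_binom_def by (simp add: assms)

lemma prod_binom_mono:
  assumes "\<And>i. i < m \<Longrightarrow> Y i \<subseteq> X i"
  shows "prod_binom L ar T m Y XA \<subseteq> prod_binom L ar T m X XA"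
proof
  fix S assume S: "S \<in> prod_binom L ar T m Y XA"
  have "S `` {i} \<in> binom L ar (induced T (X i)) (induced T (XA i))" if "i < m" for i
    using S that binom_induced_mono[OF assms[OF that], of L ar T "induced T (XA i)"]
    unfolding prod_binom_def by blast
  with S show "S \<in> prod_binom L ar T m X XA" unfolding prod_binom_def by blast
qed

lemma prod_binom_subset_Sigma:
  assumes S: "S \<in> prod_binom L ar T m X XA"
  shows "S \<subseteq> Sigma {..<m} X"
proof
  fix p assume "p \<in> S"
  with S obtain i x where p: "p = (i, x)" "i < m" "x \<in> S `` {i}" unfolding prod_binom_def by auto
  then have "x \<in> X i" using S binom_induced_subset[of "S `` {i}" L ar T "X i"] unfolding prod_binom_def by blast
  with p show "p \<in> Sigma {..<m} X" by simp
qed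

lemma finite_prod_binom:
  assumes "\<And>i. i < m \<Longrightarrow> finite (X i)"
  shows "finite (prod_binom L ar T m X XA)"
proof (rule finite_subset)
  show "prod_binom L ar T m X XA \<subseteq> Pow (Sigma {..<m} X)"
    using prod_binom_subset_Sigma[of _ L ar T m X XA] by blast
  show "finite (Pow (Sigma {..<m} X))" using assms by (intro finite_Pow_iff[THEN iffD2] finite_SigmaI) auto
qed

lemma prod_binom_Suc:
  "S' \<in> prod_binom L ar T (Suc m) X XA \<longleftrightarrow>
     (\<exists>S s. S \<in> prod_binom L ar T m X XA \<and> s \<in> binom L ar (induced T (X m)) (induced T (XA m)) \<and>
        S' = S \<union> {m} \<times> s)"
proof
  assume S': "S' \<in> prod_binom L ar T (Suc m) X XA"
  define S where "S = {p \<in> S'. fst p < m}"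
  have "S `` {i} = S' `` {i}" if "i < m" for i using that by (auto simp: S_def)
  then have "S \<in> prod_binom L ar T m X XA" using S' by (auto simp: prod_binom_def S_def)
  moreover have "S' `` {m} \<in> binom L ar (induced T (X m)) (induced T (XA m))"
    using S' by (simp add: prod_binom_def)
  moreover have "S' = S \<union> {m} \<times> S' `` {m}"
  proof -
    have "fst p < Suc m" if "p \<in> S'" for p using S' that by (auto simp: prod_binom_def)
    then show ?thesis by (force simp: S_def less_Suc_eq)
  qed
  ultimately show "\<exists>S s. S \<in> prod_binom L ar T m X XA \<and> s \<in> binom L ar (induced T (X m)) (induced T (XA m)) \<and>
        S' = S \<union> {m} \<times> s"
    by blast
next
  assume "\<exists>S s. S \<in> prod_binom L ar T m X XA \<and> s \<in> binom L ar (induced T (X m)) (induced T (XA m)) \<and>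
        S' = S \<union> {m} \<times> s"
  then obtain S s where S: "S \<in> prod_binom L ar T m X XA"
    and s: "s \<in> binom L ar (induced T (X m)) (induced T (XA m))" and S': "S' = S \<union> {m} \<times> s"
    by blast
  have "S' `` {i} = (if i = m then s else S `` {i})" for i
    using S unfolding S' prod_binom_def by auto
  then show "S' \<in> prod_binom L ar T (Suc m) X XA"
    using S s unfolding S' prod_binom_def by (auto simp: less_Suc_eq)
qed

lemma prod_arrows_extend:
  fixes T :: "('a, 'r) struct"
  assumes arrXC: "prod_arrows L ar T m XC XB XA k" and k: "k \<ge> 1"
    and finP: "finite (prod_binom L ar T m XC XA)"
    and arrZ: "arrows L ar (induced T Z) (induced T (XB m)) (induced T (XA m))
                 (card (PiE (prod_binom L ar T m XC XA) (\<lambda>_. {..<k})))"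
  shows "prod_arrows L ar T (Suc m) (XC(m := Z)) XB XA k"
  unfolding prod_arrows_def
proof (intro allI impI)
  define P where "P = prod_binom L ar T m XC XA"
  define V where "V = PiE P (\<lambda>_. {..<k})"
  have "0 \<in> {..<k}" using k by simp
  with finP have V: "finite V" "V \<noteq> {}" by (auto simp: P_def V_def finite_PiE PiE_eq_empty_iff)
  have P': "prod_binom L ar T m (XC(m := Z)) XA = P" unfolding P_def by (rule prod_binom_cong) simp
  fix c :: "(nat \<times> 'a) set \<Rightarrow> nat"
  assume c: "\<forall>S\<in>prod_binom L ar T (Suc m) (XC(m := Z)) XA. c S < k"
  let ?copies = "\<lambda>Y. binom L ar (induced T Y) (induced T (XA m))"
  \<comment> \<open>a copy \<open>s\<close> in the new coordinate is coloured by the colouring it induces on \<open>P\<close>\<close>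
  define v where "v s = restrict (\<lambda>S. c (S \<union> {m} \<times> s)) P" for s
  have "S \<union> {m} \<times> s \<in> prod_binom L ar T (Suc m) (XC(m := Z)) XA" if "S \<in> P" "s \<in> ?copies Z" for S s
    using that unfolding prod_binom_Suc P' by auto
  then have "\<forall>s\<in>?copies Z. v s \<in> V"
    using c unfolding v_def V_def by auto
  then obtain Bm w where Bm: "Bm \<in> binom L ar (induced T Z) (induced T (XB m))" and "w \<in> V"
    and vw: "\<forall>s\<in>?copies Bm. v s = w"
    using arrows_finite_colours[OF arrZ[folded P_def V_def] V, where c = v] by auto
  then have "\<forall>S\<in>prod_binom L ar T m XC XA. w S < k" unfolding V_def P_def by auto
  then obtain XB'' j where XB'': "\<forall>i<m. XB'' i \<in> binom L ar (induced T (XC i)) (induced T (XB i))"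
    and wj: "\<forall>S\<in>prod_binom L ar T m XB'' XA. w S = j"
    using arrXC unfolding prod_arrows_def by blast
  define XB' where "XB' = XB''(m := Bm)"
  have prod_XB': "prod_binom L ar T m XB' XA = prod_binom L ar T m XB'' XA"
    unfolding XB'_def by (rule prod_binom_cong) simp
  show "\<exists>XB'. (\<forall>i<Suc m. XB' i \<in> binom L ar (induced T ((XC(m := Z)) i)) (induced T (XB i))) \<and>
             (\<exists>j. \<forall>S\<in>prod_binom L ar T (Suc m) XB' XA. c S = j)"
  proof (intro exI conjI allI impI ballI)
    fix i assume "i < Suc m"
    then show "XB' i \<in> binom L ar (induced T ((XC(m := Z)) i)) (induced T (XB i))"
      using XB'' Bm by (auto simp: XB'_def less_Suc_eq)
  next
    fix S' assume "S' \<in> prod_binom L ar T (Suc m) XB' XA"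
    then obtain S s where S: "S \<in> prod_binom L ar T m XB'' XA" and s: "s \<in> ?copies Bm"
      and S': "S' = S \<union> {m} \<times> s"
      unfolding prod_binom_Suc prod_XB' by (auto simp: XB'_def)
    have "S \<in> P"
      using S prod_binom_mono[of m XB'' XC L ar T XA] XB'' binom_induced_subset unfolding P_def by blast
    then have "c S' = v s S" by (simp add: v_def S')
    also have "\<dots> = j" using vw s wj S by simp
    finally show "c S' = j" .
  qed
qed

lemma product_ramsey:
  fixes T :: "('a, 'r) struct"
  assumes R: "substructure_ramsey L ar T" and k: "k \<ge> 1"
    and fin: "\<forall>i<m. finite (XA i) \<and> XA i \<subseteq> univ T \<and> finite (XB i) \<and> XB i \<subseteq> univ T"
  shows "\<exists>XC. (\<forall>i<m. finite (XC i) \<and> XC i \<subseteq> univ T) \<and> prod_arrows L ar T m XC XB XA k"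
  using fin
proof (induction m)
  case 0
  have "prod_binom L ar T 0 X XA = {{}}" for X by (auto simp: prod_binom_def)
  then show ?case by (auto simp: prod_arrows_def)
next
  case (Suc m)
  then obtain XC where XC: "\<forall>i<m. finite (XC i) \<and> XC i \<subseteq> univ T"
    and arrXC: "prod_arrows L ar T m XC XB XA k"
    by auto
  let ?V = "PiE (prod_binom L ar T m XC XA) (\<lambda>_. {..<k})"
  have finP: "finite (prod_binom L ar T m XC XA)" using XC by (intro finite_prod_binom) auto
  then have "card ?V \<ge> 1" using k by (simp add: card_PiE)
  then obtain Z where Z: "finite Z" "Z \<subseteq> univ T"
    and arrZ: "arrows L ar (induced T Z) (induced T (XB m)) (induced T (XA m)) (card ?V)"
    using R[unfolded substructure_ramsey_def, rule_format, of "card ?V" "XA m" "XB m"] Suc.prems by auto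
  have "\<forall>i<Suc m. finite ((XC(m := Z)) i) \<and> (XC(m := Z)) i \<subseteq> univ T"
    using XC Z by (auto simp: less_Suc_eq)
  with prod_arrows_extend[OF arrXC k finP arrZ] show ?case by blast
qed

section \<open>Copies in \<open>In_struct\<close>\<close>

lemma univ_In_struct [simp]: "univ (In_struct lt n T) = {..<n} \<times> univ T"
  by (simp add: In_struct_def univ_def)

lemma rel_In_struct_Inr [simp]:
  "rel (In_struct lt n T) (Inr j) xs = (case xs of [p] \<Rightarrow> fst p = j | _ \<Rightarrow> False)"
  by (simp add: In_struct_def rel_def)

lemma rel_In_struct_lt [simp]:
  "rel (In_struct lt n T) (Inl lt) xs =
     (case xs of [p, q] \<Rightarrow> fst p < fst q \<or> (fst p = fst q \<and> rel T lt [snd p, snd q]) | _ \<Rightarrow> False)"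
  by (simp add: In_struct_def rel_def)

lemma rel_In_struct_other [simp]:
  "R \<noteq> lt \<Longrightarrow> rel (In_struct lt n T) (Inl R) xs =
     ((\<forall>p\<in>set xs. \<forall>q\<in>set xs. fst p = fst q) \<and> rel T R (map snd xs))"
  by (simp add: In_struct_def rel_def)

lemma In_ar_simps [simp]: "In_ar ar (Inl R) = ar R" "In_ar ar (Inr i) = 1"
  by (simp_all add: In_ar_def)

lemma In_lang_simps [simp]: "Inl R \<in> In_lang L n \<longleftrightarrow> R \<in> L" "Inr i \<in> In_lang L n \<longleftrightarrow> i < n"
  by (auto simp: In_lang_def)

lemma rel_In_struct_Pair:
  assumes "R \<noteq> lt \<or> length xs = 2"
  shows "rel (In_struct lt n T) (Inl R) (map (Pair i) xs) \<longleftrightarrow> rel T R xs"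
proof (cases "R = lt")
  case True
  with assms obtain a b where "xs = [a, b]"
    by (metis One_nat_def Suc_1 length_0_conv length_Suc_conv)
  with True show ?thesis by simp
qed (simp add: comp_def)

lemma rel_In_struct_mixed_levels:
  assumes mixed: "\<not> (\<exists>i. set (map fst xs) \<subseteq> {i})"
  shows "rel (In_struct lt n T) (Inl R) xs \<longleftrightarrow> R = lt \<and> (case map fst xs of [i, j] \<Rightarrow> i < j | _ \<Rightarrow> False)"
proof (cases "R = lt")
  case False
  have "\<not> (\<forall>p\<in>set xs. \<forall>q\<in>set xs. fst p = fst q)"
  proof
    assume same: "\<forall>p\<in>set xs. \<forall>q\<in>set xs. fst p = fst q"
    show False
    proof (cases xs)
      case (Cons y ys)
      then have "y \<in> set xs" by simp
      then have "fst p = fst y" if "p \<in> set xs" for p using same that by blast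
      then have "set (map fst xs) \<subseteq> {fst y}" by auto
      with mixed show False by blast
    qed (use mixed in simp)
  qed
  with False show ?thesis by simp
next
  case True
  show ?thesis
  proof (cases "\<exists>p q. xs = [p, q]")
    case True
    then obtain p q where xs: "xs = [p, q]" by blast
    with mixed have "fst p \<noteq> fst q" by auto
    with xs \<open>R = lt\<close> show ?thesis by auto
  next
    case False
    then show ?thesis using \<open>R = lt\<close> by (auto split: list.splits)
  qed
qed

definition levelwise :: "(nat \<Rightarrow> 'a \<Rightarrow> 'b) \<Rightarrow> nat \<times> 'a \<Rightarrow> nat \<times> 'b" where
  "levelwise g p = (fst p, g (fst p) (snd p))"

lemma levelwise_Pair [simp]: "levelwise g (i, x) = (i, g i x)"
  by (simp add: levelwise_def)

lemma fst_levelwise [simp]: "fst (levelwise g p) = fst p"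
  by (simp add: levelwise_def)

lemma Image_levelwise: "(levelwise g ` S) `` {i} = g i ` (S `` {i})"
proof (intro equalityI subsetI)
  fix y assume "y \<in> (levelwise g ` S) `` {i}"
  then obtain p where "p \<in> S" "(i, y) = levelwise g p" by auto
  then show "y \<in> g i ` (S `` {i})" by (cases p) (auto simp: levelwise_def)
next
  fix y assume "y \<in> g i ` (S `` {i})"
  then obtain x where "(i, x) \<in> S" "y = g i x" by auto
  then have "(i, y) \<in> levelwise g ` S" by (force simp: levelwise_def)
  then show "y \<in> (levelwise g ` S) `` {i}" by simp
qed

lemma set_eq_iff_Image:
  assumes "A \<subseteq> {..<n} \<times> UNIV" "B \<subseteq> {..<n} \<times> UNIV"
  shows "A = B \<longleftrightarrow> (\<forall>i<n. A `` {i} = B `` {i})"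
proof (intro iffI allI impI)
  assume "\<forall>i<n. A `` {i} = B `` {i}"
  then have "(i, x) \<in> A \<longleftrightarrow> (i, x) \<in> B" for i x
    using assms by (metis Image_singleton_iff SigmaE2 lessThan_iff subsetD)
  then show "A = B" by (simp add: set_eq_iff)
qed simp

lemma bij_betw_levelwise:
  assumes "S \<subseteq> {..<n} \<times> UNIV" "Y \<subseteq> {..<n} \<times> UNIV"
  shows "bij_betw (levelwise g) S Y \<longleftrightarrow> (\<forall>i<n. bij_betw (g i) (S `` {i}) (Y `` {i}))"
proof -
  have "inj_on (levelwise g) S \<longleftrightarrow> (\<forall>i<n. inj_on (g i) (S `` {i}))"
  proof
    assume inj: "inj_on (levelwise g) S"
    show "\<forall>i<n. inj_on (g i) (S `` {i})"
    proof (intro allI impI inj_onI)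
      fix i x y assume "x \<in> S `` {i}" "y \<in> S `` {i}" "g i x = g i y"
      then show "x = y" using inj_onD[OF inj, of "(i, x)" "(i, y)"] by simp
    qed
  next
    assume inj: "\<forall>i<n. inj_on (g i) (S `` {i})"
    show "inj_on (levelwise g) S"
    proof (rule inj_onI)
      fix p q assume pq: "p \<in> S" "q \<in> S" "levelwise g p = levelwise g q"
      then have "fst p = fst q" and "fst p < n" using assms(1) by (auto dest: arg_cong[of _ _ fst])
      moreover have "snd p \<in> S `` {fst p}" "snd q \<in> S `` {fst p}"
        using pq(1,2) \<open>fst p = fst q\<close> by (metis Image_singleton_iff prod.collapse)+
      moreover have "g (fst p) (snd p) = g (fst p) (snd q)"
        using pq(3) \<open>fst p = fst q\<close> by (simp add: levelwise_def)
      ultimately have "snd p = snd q"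
        using inj_onD[OF inj[rule_format, OF \<open>fst p < n\<close>]] by blast
      with \<open>fst p = fst q\<close> show "p = q" by (rule prod_eqI)
    qed
  qed
  moreover have "levelwise g ` S = Y \<longleftrightarrow> (\<forall>i<n. g i ` (S `` {i}) = Y `` {i})"
  proof -
    have "levelwise g ` S \<subseteq> {..<n} \<times> UNIV" using assms(1) by (auto simp: levelwise_def)
    then show ?thesis using assms(2) by (simp add: set_eq_iff_Image Image_levelwise)
  qed
  ultimately show ?thesis by (simp only: bij_betw_def imp_conjR all_conj_distrib)
qed

definition preserves_rels ::
  "'r set \<Rightarrow> ('r \<Rightarrow> nat) \<Rightarrow> ('a, 'r) struct \<Rightarrow> ('b, 'r) struct \<Rightarrow> ('a \<Rightarrow> 'b) \<Rightarrow> bool" where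
  "preserves_rels L ar A B f \<longleftrightarrow>
     (\<forall>R\<in>L. \<forall>xs. length xs = ar R \<and> set xs \<subseteq> univ A \<longrightarrow> (rel A R xs \<longleftrightarrow> rel B R (map f xs)))"

lemma is_iso_iff_preserves_rels:
  "is_iso L ar A B f \<longleftrightarrow> bij_betw f (univ A) (univ B) \<and> preserves_rels L ar A B f"
  by (simp add: is_iso_def preserves_rels_def)

lemma map_Pair_map_snd: "set (map fst xs) \<subseteq> {i} \<Longrightarrow> map (Pair i) (map snd xs) = xs"
  by (induction xs) auto

lemma map_fst_levelwise: "map fst (map (levelwise g) xs) = map fst xs"
  by simp

lemma rel_In_struct_map_levelwise_Pair:
  assumes "R \<noteq> lt \<or> length xs = 2"
  shows "rel (In_struct lt n T) (Inl R) (map (levelwise g) (map (Pair i) xs)) \<longleftrightarrow> rel T R (map (g i) xs)"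
proof -
  have "map (levelwise g) (map (Pair i) xs) = map (Pair i) (map (g i) xs)" by simp
  then show ?thesis using assms by (simp only: rel_In_struct_Pair length_map)
qed

lemma preserves_rels_levels_of_In_struct:
  assumes lt: "ar lt = 2" and i: "i < n"
    and H: "preserves_rels (In_lang L n) (In_ar ar)
              (induced (In_struct lt n T) S) (induced (In_struct lt n T) Y) (levelwise g)"
  shows "preserves_rels L ar (induced T (S `` {i})) (induced T (Y `` {i})) (g i)"
  unfolding preserves_rels_def
proof (intro allI impI ballI)
  fix R xs assume "R \<in> L" and xs: "length xs = ar R \<and> set xs \<subseteq> univ (induced T (S `` {i}))"
  then have sub: "set (map (Pair i) xs) \<subseteq> S" by auto
  have pair: "R \<noteq> lt \<or> length xs = 2" using xs lt by auto
  have "rel T R xs \<longleftrightarrow> rel (In_struct lt n T) (Inl R) (map (Pair i) xs)"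
    using pair by (simp add: rel_In_struct_Pair)
  also have "\<dots> \<longleftrightarrow> rel (In_struct lt n T) (Inl R) (map (levelwise g) (map (Pair i) xs))"
    using H \<open>R \<in> L\<close> xs sub i unfolding preserves_rels_def by simp
  also have "\<dots> \<longleftrightarrow> rel T R (map (g i) xs)"
    using pair by (rule rel_In_struct_map_levelwise_Pair)
  finally show "rel (induced T (S `` {i})) R xs \<longleftrightarrow> rel (induced T (Y `` {i})) R (map (g i) xs)"
    by simp
qed

lemma preserves_rels_In_struct_of_levels:
  assumes lt: "ar lt = 2" and S: "S \<subseteq> univ (In_struct lt n T)"
    and H: "\<forall>i<n. preserves_rels L ar (induced T (S `` {i})) (induced T (Y `` {i})) (g i)"
  shows "preserves_rels (In_lang L n) (In_ar ar)
           (induced (In_struct lt n T) S) (induced (In_struct lt n T) Y) (levelwise g)"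
  unfolding preserves_rels_def
proof (intro allI impI ballI)
  fix R xs
  assume R: "R \<in> In_lang L n" and xs: "length xs = In_ar ar R \<and> set xs \<subseteq> univ (induced (In_struct lt n T) S)"
  show "rel (induced (In_struct lt n T) S) R xs \<longleftrightarrow> rel (induced (In_struct lt n T) Y) R (map (levelwise g) xs)"
  proof (cases R)
    case (Inr j)
    with xs obtain p where "xs = [p]" by (auto simp: length_Suc_conv)
    with Inr show ?thesis by simp
  next
    case (Inl R')
    show ?thesis
    proof (cases "\<exists>i. set (map fst xs) \<subseteq> {i}")
      case True
      show ?thesis
      proof (cases xs)
        case (Cons p ps)
        with xs S have "fst p < n" by auto
        from True Cons have level: "set (map fst xs) \<subseteq> {fst p}" by auto
        define ys where "ys = map snd xs"
        have xs_ys: "xs = map (Pair (fst p)) ys" unfolding ys_def using map_Pair_map_snd[OF level] by simp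
        have "set ys \<subseteq> S `` {fst p}" using xs unfolding xs_ys by auto
        moreover have "R' \<in> L" "length ys = ar R'" using R xs Inl by (auto simp: xs_ys)
        moreover have pair: "R' \<noteq> lt \<or> length ys = 2" using lt \<open>length ys = ar R'\<close> by auto
        ultimately have "rel T R' ys \<longleftrightarrow> rel T R' (map (g (fst p)) ys)"
          using H \<open>fst p < n\<close> unfolding preserves_rels_def by simp
        with pair show ?thesis
          by (simp only: Inl rel_induced xs_ys rel_In_struct_Pair rel_In_struct_map_levelwise_Pair)
      qed simp
    next
      case False
      then have "\<not> (\<exists>i. set (map fst (map (levelwise g) xs)) \<subseteq> {i})"
        by (simp only: map_fst_levelwise simp_thms)
      with False Inl show ?thesis
        by (simp only: rel_induced rel_In_struct_mixed_levels map_fst_levelwise)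
    qed
  qed
qed

lemma is_iso_In_struct_levelwise_iff:
  assumes lt: "ar lt = 2" and S: "S \<subseteq> univ (In_struct lt n T)" and Y: "Y \<subseteq> univ (In_struct lt n T)"
  shows "is_iso (In_lang L n) (In_ar ar)
           (induced (In_struct lt n T) S) (induced (In_struct lt n T) Y) (levelwise g) \<longleftrightarrow>
         (\<forall>i<n. is_iso L ar (induced T (S `` {i})) (induced T (Y `` {i})) (g i))"
proof -
  have "S \<subseteq> {..<n} \<times> UNIV" "Y \<subseteq> {..<n} \<times> UNIV" using S Y by auto
  then have "bij_betw (levelwise g) S Y \<longleftrightarrow> (\<forall>i<n. bij_betw (g i) (S `` {i}) (Y `` {i}))"
    by (rule bij_betw_levelwise)
  moreover have "preserves_rels (In_lang L n) (In_ar ar)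
      (induced (In_struct lt n T) S) (induced (In_struct lt n T) Y) (levelwise g) \<longleftrightarrow>
    (\<forall>i<n. preserves_rels L ar (induced T (S `` {i})) (induced T (Y `` {i})) (g i))"
    using preserves_rels_levels_of_In_struct[where ar = ar and lt = lt and T = T and S = S and Y = Y, OF lt]
      preserves_rels_In_struct_of_levels[where ar = ar and lt = lt, OF lt S]
    by blast
  ultimately show ?thesis
    unfolding is_iso_iff_preserves_rels by auto
qed

lemma is_iso_In_struct_fst:
  assumes f: "is_iso (In_lang L n) (In_ar ar) (induced (In_struct lt n T) S) (induced (In_struct lt n T) Y) f"
    and S: "S \<subseteq> univ (In_struct lt n T)" and "p \<in> S"
  shows "fst (f p) = fst p"
proof -
  have "fst p < n" using S \<open>p \<in> S\<close> by auto
  then have "rel (In_struct lt n T) (Inr (fst p)) [p] \<longleftrightarrow> rel (In_struct lt n T) (Inr (fst p)) [f p]"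
    using f \<open>p \<in> S\<close> unfolding is_iso_def by (auto dest!: bspec[of _ _ "Inr (fst p)"] spec[of _ "[p]"])
  then show ?thesis by simp
qed

lemma binom_In_struct:
  assumes lt: "ar lt = 2" and Y: "Y \<subseteq> univ (In_struct lt n T)" and Z: "Z \<subseteq> univ (In_struct lt n T)"
  shows "binom (In_lang L n) (In_ar ar) (induced (In_struct lt n T) Y) (induced (In_struct lt n T) Z) =
         prod_binom L ar T n (\<lambda>i. Y `` {i}) (\<lambda>i. Z `` {i})"
proof (intro equalityI subsetI)
  fix S assume "S \<in> binom (In_lang L n) (In_ar ar) (induced (In_struct lt n T) Y) (induced (In_struct lt n T) Z)"
  then have SY: "S \<subseteq> Y"
    and "isomorphic (In_lang L n) (In_ar ar) (induced (In_struct lt n T) S) (induced (In_struct lt n T) Z)"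
    by (simp_all add: binom_induced)
  then obtain f where f: "is_iso (In_lang L n) (In_ar ar) (induced (In_struct lt n T) S) (induced (In_struct lt n T) Z) f"
    unfolding isomorphic_def by blast
  have S: "S \<subseteq> univ (In_struct lt n T)" using SY Y by blast
  define g where "g i x = snd (f (i, x))" for i x
  have "levelwise g p = f p" if "p \<in> S" for p
    using is_iso_In_struct_fst[OF f S that] by (simp add: levelwise_def g_def prod_eq_iff)
  then have "is_iso (In_lang L n) (In_ar ar) (induced (In_struct lt n T) S) (induced (In_struct lt n T) Z) (levelwise g)"
    using f is_iso_cong[of "induced (In_struct lt n T) S" "levelwise g" f] by simp
  then have "\<forall>i<n. is_iso L ar (induced T (S `` {i})) (induced T (Z `` {i})) (g i)"
    using is_iso_In_struct_levelwise_iff[where ar = ar and lt = lt, OF lt S Z] by simp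
  with S SY show "S \<in> prod_binom L ar T n (\<lambda>i. Y `` {i}) (\<lambda>i. Z `` {i})"
    unfolding prod_binom_def binom_induced isomorphic_def by auto
next
  fix S assume S: "S \<in> prod_binom L ar T n (\<lambda>i. Y `` {i}) (\<lambda>i. Z `` {i})"
  then have "\<forall>i<n. \<exists>h. is_iso L ar (induced T (S `` {i})) (induced T (Z `` {i})) h"
    by (simp add: prod_binom_def binom_induced isomorphic_def)
  then obtain g where g: "\<forall>i<n. is_iso L ar (induced T (S `` {i})) (induced T (Z `` {i})) (g i)"
    by metis
  have SY: "S \<subseteq> Y" using prod_binom_subset_Sigma[OF S] by auto
  then have "S \<subseteq> univ (In_struct lt n T)" using Y by blast
  with g have "is_iso (In_lang L n) (In_ar ar) (induced (In_struct lt n T) S) (induced (In_struct lt n T) Z) (levelwise g)"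
    using is_iso_In_struct_levelwise_iff[where ar = ar and lt = lt, OF lt _ Z] by blast
  with SY show "S \<in> binom (In_lang L n) (In_ar ar) (induced (In_struct lt n T) Y) (induced (In_struct lt n T) Z)"
    unfolding binom_induced isomorphic_def by blast
qed

lemma Image_Sigma_lessThan: "i < n \<Longrightarrow> Sigma {..<n} X `` {i} = X i"
  by auto

lemma binom_In_struct_Sigma:
  assumes lt: "ar lt = 2" and X: "\<forall>i<n. X i \<subseteq> univ T" and Z: "Z \<subseteq> univ (In_struct lt n T)"
  shows "binom (In_lang L n) (In_ar ar) (induced (In_struct lt n T) (Sigma {..<n} X)) (induced (In_struct lt n T) Z) =
         prod_binom L ar T n X (\<lambda>i. Z `` {i})"
proof -
  have "Sigma {..<n} X \<subseteq> univ (In_struct lt n T)" using X by auto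
  then have "binom (In_lang L n) (In_ar ar) (induced (In_struct lt n T) (Sigma {..<n} X)) (induced (In_struct lt n T) Z) =
      prod_binom L ar T n (\<lambda>i. Sigma {..<n} X `` {i}) (\<lambda>i. Z `` {i})"
    by (rule binom_In_struct[where ar = ar and lt = lt, OF lt _ Z])
  also have "\<dots> = prod_binom L ar T n X (\<lambda>i. Z `` {i})"
    by (rule prod_binom_cong) (rule Image_Sigma_lessThan)
  finally show ?thesis .
qed

lemma arrows_In_struct_Sigma:
  assumes lt: "ar lt = 2"
    and YA: "YA \<subseteq> univ (In_struct lt n T)" and YB: "YB \<subseteq> univ (In_struct lt n T)"
    and XC: "\<forall>i<n. XC i \<subseteq> univ T"
    and arr: "prod_arrows L ar T n XC (\<lambda>i. YB `` {i}) (\<lambda>i. YA `` {i}) k"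
  shows "arrows (In_lang L n) (In_ar ar) (induced (In_struct lt n T) (Sigma {..<n} XC))
           (induced (In_struct lt n T) YB) (induced (In_struct lt n T) YA) k"
  unfolding arrows_def
proof (intro allI impI)
  fix c
  assume "\<forall>S\<in>binom (In_lang L n) (In_ar ar) (induced (In_struct lt n T) (Sigma {..<n} XC))
            (induced (In_struct lt n T) YA). c S < k"
  then have "\<forall>S\<in>prod_binom L ar T n XC (\<lambda>i. YA `` {i}). c S < k"
    by (simp add: binom_In_struct_Sigma[where ar = ar and lt = lt, OF lt XC YA])
  then obtain XB' j where XB': "\<forall>i<n. XB' i \<in> binom L ar (induced T (XC i)) (induced T (YB `` {i}))"
    and const: "\<forall>S\<in>prod_binom L ar T n XB' (\<lambda>i. YA `` {i}). c S = j"
    using arr unfolding prod_arrows_def by blast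
  have XB'_XC: "\<forall>i<n. XB' i \<subseteq> XC i" using XB' binom_induced_subset by blast
  then have "\<forall>i<n. XB' i \<subseteq> univ T" using XC by blast
  then have "binom (In_lang L n) (In_ar ar) (induced (induced (In_struct lt n T) (Sigma {..<n} XC)) (Sigma {..<n} XB'))
               (induced (In_struct lt n T) YA) = prod_binom L ar T n XB' (\<lambda>i. YA `` {i})"
    by (simp add: binom_In_struct_Sigma[where ar = ar and lt = lt, OF lt _ YA])
  moreover have "Sigma {..<n} XB' \<in> prod_binom L ar T n XC (\<lambda>i. YB `` {i})"
    using XB' unfolding prod_binom_def by (auto simp: Image_Sigma_lessThan)
  ultimately show "\<exists>B'\<in>binom (In_lang L n) (In_ar ar) (induced (In_struct lt n T) (Sigma {..<n} XC))
            (induced (In_struct lt n T) YB).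
          \<exists>i. \<forall>S\<in>binom (In_lang L n) (In_ar ar) (induced (induced (In_struct lt n T) (Sigma {..<n} XC)) B')
            (induced (In_struct lt n T) YA). c S = i"
    using const binom_In_struct_Sigma[where ar = ar and lt = lt, OF lt XC YB] by auto
qed

lemma substructure_ramsey_In_struct:
  assumes R: "substructure_ramsey L ar T" and lt: "ar lt = 2"
  shows "substructure_ramsey (In_lang L n) (In_ar ar) (In_struct lt n T)"
  unfolding substructure_ramsey_def
proof (intro allI impI)
  fix k :: nat and YA YB
  assume k: "k \<ge> 1" and YA: "finite YA" "YA \<subseteq> univ (In_struct lt n T)"
    and YB: "finite YB" "YB \<subseteq> univ (In_struct lt n T)"
  have "finite (YA `` {i})" "finite (YB `` {i})" for i
    using YA YB by (auto intro: finite_Image)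
  moreover have "YA `` {i} \<subseteq> univ T" "YB `` {i} \<subseteq> univ T" for i
    using YA YB by auto
  ultimately obtain XC where XC: "\<forall>i<n. finite (XC i) \<and> XC i \<subseteq> univ T"
    and arr: "prod_arrows L ar T n XC (\<lambda>i. YB `` {i}) (\<lambda>i. YA `` {i}) k"
    using product_ramsey[where m = n and XA = "\<lambda>i. YA `` {i}" and XB = "\<lambda>i. YB `` {i}", OF R k] by auto
  have "finite (Sigma {..<n} XC)" "Sigma {..<n} XC \<subseteq> univ (In_struct lt n T)"
    using XC by auto
  moreover have "arrows (In_lang L n) (In_ar ar) (induced (In_struct lt n T) (Sigma {..<n} XC))
      (induced (In_struct lt n T) YB) (induced (In_struct lt n T) YA) k"
    using XC by (intro arrows_In_struct_Sigma[where ar = ar and lt = lt, OF lt YA(2) YB(2) _ arr]) blast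
  ultimately show "\<exists>Z. finite Z \<and> Z \<subseteq> univ (In_struct lt n T) \<and>
      arrows (In_lang L n) (In_ar ar) (induced (In_struct lt n T) Z) (induced (In_struct lt n T) YB)
        (induced (In_struct lt n T) YA) k"
    by blast
qed

theorem theorem6p1:
  fixes L :: "'r set" and ar :: "'r \<Rightarrow> nat" and E lt :: 'r
    and Tstar :: "('a, 'r) struct" and n :: nat
  assumes "countable L" and "E \<in> L" and "lt \<in> L" and "E \<noteq> lt"
    and "ar E = 2" and "ar lt = 2"
    and "countable (univ Tstar)"
    and "tournament E Tstar"
    and "homogeneous {E} ar Tstar"
    and "linear_order_rel lt Tstar"
    and "ramsey_property L ar (Age L ar Tstar)"
    and "n > 0"
  shows "ramsey_property (In_lang L n) (In_ar ar)
           (Age (In_lang L n) (In_ar ar) (In_struct lt n Tstar))"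
proof -
  have "substructure_ramsey L ar Tstar"
    using \<open>ramsey_property L ar (Age L ar Tstar)\<close> by (simp add: ramsey_property_Age_iff_substructure_ramsey)
  then have "substructure_ramsey (In_lang L n) (In_ar ar) (In_struct lt n Tstar)"
    using \<open>ar lt = 2\<close> by (rule substructure_ramsey_In_struct)
  then show ?thesis by (simp add: ramsey_property_Age_iff_substructure_ramsey)
qed

end
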